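(* Let $n,m\ge1$ and $1\le t\le m$ be integers, and let $\pi$ be a uniformly random permutation of $[nm]$. For $i\in[n]$ let $U^i_\pi=\{\pi(1),\dots,\pi(t)\}\cap\{m(i-1)+1,\dots,mi\}$ and $C_\pi=\max_{i\in[n]}|U^i_\pi|$. Then for every integer $j$ with $1\le j<t$, $$\Pr_\pi[C_\pi=j]\le\frac{n\binom{m}{t}}{\binom{nm}{t}}\,(nm)^{3(t-j)}.$$ *)

theory Defs
  imports "HOL-Probability.Probability" "HOL-Combinatorics.Permutations"
begin

definition U_block :: "nat \<Rightarrow> nat \<Rightarrow> (nat \<Rightarrow> nat) \<Rightarrow> nat \<Rightarrow> nat set" where
  "U_block m t \<pi> i = \<pi> ` {1..t} \<inter> {m * (i - 1) + 1 .. m * i}"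

definition C_max :: "nat \<Rightarrow> nat \<Rightarrow> nat \<Rightarrow> (nat \<Rightarrow> nat) \<Rightarrow> nat" where
  "C_max n m t \<pi> = Max ((\<lambda>i. card (U_block m t \<pi> i)) ` {1..n})"

end

theory Submission
  imports Defs
begin

text \<open>
  If \<open>C\<^sub>\<pi> = j\<close>, some block \<open>B\<^sub>i\<close> meets the image \<open>S = \<pi>[1..t]\<close> in exactly \<open>j\<close> points.
  A union bound over the \<open>n\<close> blocks and over the possible images \<open>S\<close> gives the result:
  each \<open>t\<close>-set is the image with probability \<open>1 / binomial(nm, t)\<close>, and there are at most
  \<open>binomial(m, j) \<cdot> binomial(nm, t - j) \<le> binomial(m, t) \<cdot> (nm)^(2(t - j))\<close> sets \<open>S\<close> with
  \<open>|S \<inter> B\<^sub>i| = j\<close>.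
\<close>

lemma card_permutes_stabilizer_le:
  assumes "finite X" "T \<subseteq> X"
  shows "card {\<rho>. \<rho> permutes X \<and> \<rho> ` T = T} \<le> fact (card T) * fact (card (X - T))"
proof -
  let ?A = "{\<rho>. \<rho> permutes X \<and> \<rho> ` T = T}"
  let ?P = "{p. p permutes T} \<times> {p. p permutes (X - T)}"
  define restrict where
    "restrict \<rho> = ((\<lambda>x. if x \<in> T then \<rho> x else x), (\<lambda>x. if x \<in> X - T then \<rho> x else x))"
    for \<rho> :: "'a \<Rightarrow> 'a"
  have fin: "finite T" "finite (X - T)" using assms finite_subset by auto
  have "inj_on restrict ?A"
  proof (rule inj_onI)
    fix a b assume a: "a \<in> ?A" and b: "b \<in> ?A" and e: "restrict a = restrict b"
    show "a = b"
    proof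
      fix x
      show "a x = b x"
      proof (cases "x \<in> X")
        case True
        then show ?thesis using e unfolding restrict_def by (auto simp: fun_eq_iff split: if_splits)
      next
        case False
        then show ?thesis using a b permutes_not_in by (metis (no_types, lifting) mem_Collect_eq)
      qed
    qed
  qed
  moreover have "restrict ` ?A \<subseteq> ?P"
  proof
    fix y assume "y \<in> restrict ` ?A"
    then obtain \<rho> where r: "\<rho> permutes X" "\<rho> ` T = T" and y: "y = restrict \<rho>" by auto
    have inj: "inj_on \<rho> X" using r(1) permutes_inj_on by blast
    have "\<rho> ` (X - T) = X - T"
      using r permutes_image[OF r(1)] inj assms(2) by (simp add: inj_on_image_set_diff)
    then have "bij_betw \<rho> T T" "bij_betw \<rho> (X - T) (X - T)"
      unfolding bij_betw_def using inj_on_subset[OF inj] assms(2) r(2) by auto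
    then have "bij_betw (\<lambda>x. if x \<in> T then \<rho> x else x) T T"
      "bij_betw (\<lambda>x. if x \<in> X - T then \<rho> x else x) (X - T) (X - T)"
      by (auto elim!: bij_betw_cong[THEN iffD1, rotated])
    then show "y \<in> ?P" unfolding y restrict_def by (auto simp: permutes_altdef)
  qed
  moreover have "finite ?P" using finite_permutations fin by blast
  ultimately have "card ?A \<le> card ?P" by (rule card_inj_on_le)
  also have "\<dots> = fact (card T) * fact (card (X - T))"
    using card_permutations[OF refl fin(1)] card_permutations[OF refl fin(2)]
    by (simp add: card_cartesian_product)
  finally show ?thesis .
qed

lemma exists_permutes_image_eq:
  assumes "finite X" "S \<subseteq> X" "T \<subseteq> X" "card S = card T"
  shows "\<exists>\<sigma>. \<sigma> permutes X \<and> \<sigma> ` S = T"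
proof -
  have fin: "finite S" "finite T" using assms finite_subset by auto
  obtain f where f: "bij_betw f S T" using finite_same_card_bij fin assms(4) by blast
  have "card (X - S) = card (X - T)"
    using card_Diff_subset fin assms by metis
  then obtain g where g: "bij_betw g (X - S) (X - T)"
    using finite_same_card_bij assms(1) by (metis finite_Diff)
  define \<sigma> where "\<sigma> x = (if x \<in> S then f x else if x \<in> X - S then g x else x)" for x
  have b1: "bij_betw \<sigma> S T"
    using f by (rule bij_betw_cong[THEN iffD1, rotated]) (simp add: \<sigma>_def)
  have "bij_betw \<sigma> (X - S) (X - T)"
    using g by (rule bij_betw_cong[THEN iffD1, rotated]) (simp add: \<sigma>_def)
  then have "bij_betw \<sigma> (S \<union> (X - S)) (T \<union> (X - T))" by (rule bij_betw_combine[OF b1]) auto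
  moreover have "S \<union> (X - S) = X" "T \<union> (X - T) = X" using assms by auto
  ultimately have "\<sigma> permutes X" unfolding permutes_altdef using assms(2) by (auto simp: \<sigma>_def)
  moreover have "\<sigma> ` S = T" using b1 bij_betw_imp_surj_on by blast
  ultimately show ?thesis by blast
qed

lemma card_permutes_image_eq_le:
  assumes "finite X" "S \<subseteq> X" "T \<subseteq> X" "card S = card T"
  shows "card {\<pi>. \<pi> permutes X \<and> \<pi> ` T = S} \<le> fact (card T) * fact (card (X - T))"
proof -
  obtain \<sigma> where \<sigma>: "\<sigma> permutes X" "\<sigma> ` S = T" using exists_permutes_image_eq assms by metis
  let ?E = "{\<pi>. \<pi> permutes X \<and> \<pi> ` T = S}"
  have "inj_on ((\<circ>) \<sigma>) ?E"
    using permutes_inj[OF \<sigma>(1)] by (auto intro!: inj_onI simp: fun_eq_iff inj_def)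
  moreover have "(\<circ>) \<sigma> ` ?E \<subseteq> {\<rho>. \<rho> permutes X \<and> \<rho> ` T = T}"
  proof (rule image_subsetI)
    fix \<pi> assume \<pi>: "\<pi> \<in> ?E"
    then have "(\<sigma> \<circ> \<pi>) ` T = \<sigma> ` S" using image_comp[of \<sigma> \<pi> T] by auto
    with \<pi> \<sigma>(2) have "\<pi> permutes X" "(\<sigma> \<circ> \<pi>) ` T = T" by simp_all
    then show "\<sigma> \<circ> \<pi> \<in> {\<rho>. \<rho> permutes X \<and> \<rho> ` T = T}"
      using \<sigma>(1) permutes_compose by blast
  qed
  moreover have "finite {\<rho>. \<rho> permutes X \<and> \<rho> ` T = T}"
    using finite_permutations[OF assms(1)] by simp
  ultimately have "card ?E \<le> card {\<rho>. \<rho> permutes X \<and> \<rho> ` T = T}"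
    by (rule card_inj_on_le)
  also have "\<dots> \<le> fact (card T) * fact (card (X - T))"
    by (rule card_permutes_stabilizer_le[OF assms(1,3)])
  finally show ?thesis .
qed

lemma card_subsets_meeting_le:
  assumes "finite X" "B \<subseteq> X"
  shows "card {S. S \<subseteq> X \<and> card S = t \<and> card (S \<inter> B) = j}
           \<le> (card B choose j) * (card X choose (t - j))"
proof -
  let ?F = "{S. S \<subseteq> X \<and> card S = t \<and> card (S \<inter> B) = j}"
  let ?P = "{C. C \<subseteq> B \<and> card C = j} \<times> {C. C \<subseteq> X \<and> card C = t - j}"
  have finB: "finite B" using assms finite_subset by blast
  have "inj_on (\<lambda>S. (S \<inter> B, S - B)) ?F" by (rule inj_onI) (metis Int_Diff_Un prod.inject)
  moreover have "(\<lambda>S. (S \<inter> B, S - B)) ` ?F \<subseteq> ?P"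
  proof (rule image_subsetI)
    fix S assume S: "S \<in> ?F"
    then have "finite S" using assms(1) finite_subset by blast
    with S show "(S \<inter> B, S - B) \<in> ?P" by (auto simp: card_Diff_subset_Int)
  qed
  moreover have "finite ?P"
    using assms(1) finB by (auto intro: finite_subset[of _ "Pow X"] finite_subset[of _ "Pow B"])
  ultimately have "card ?F \<le> card ?P" by (rule card_inj_on_le)
  also have "\<dots> = (card B choose j) * (card X choose (t - j))"
    using n_subsets[OF assms(1)] n_subsets[OF finB] by (simp add: card_cartesian_product)
  finally show ?thesis .
qed

lemma card_permutes_image_meeting_le:
  assumes "finite X" "T \<subseteq> X" "B \<subseteq> X"
  shows "card {\<pi>. \<pi> permutes X \<and> card (\<pi> ` T \<inter> B) = j}
           \<le> (card B choose j) * (card X choose (card T - j))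
               * (fact (card T) * fact (card X - card T))"
proof -
  let ?F = "{S. S \<subseteq> X \<and> card S = card T \<and> card (S \<inter> B) = j}"
  let ?E = "\<lambda>S. {\<pi>. \<pi> permutes X \<and> \<pi> ` T = S}"
  let ?K = "fact (card T) * fact (card X - card T)"
  have "{\<pi>. \<pi> permutes X \<and> card (\<pi> ` T \<inter> B) = j} \<subseteq> (\<Union>S\<in>?F. ?E S)"
  proof
    fix \<pi> assume "\<pi> \<in> {\<pi>. \<pi> permutes X \<and> card (\<pi> ` T \<inter> B) = j}"
    then have \<pi>: "\<pi> permutes X" "card (\<pi> ` T \<inter> B) = j" by auto
    have "\<pi> ` T \<subseteq> X" using \<pi>(1) assms(2) permutes_image by blast
    moreover have "card (\<pi> ` T) = card T"
      using card_image permutes_inj_on[OF \<pi>(1)] inj_on_subset by blast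
    ultimately show "\<pi> \<in> (\<Union>S\<in>?F. ?E S)" using \<pi> by blast
  qed
  moreover have "finite (\<Union>S\<in>?F. ?E S)"
    using finite_permutations[OF assms(1)] by (auto intro: finite_subset)
  ultimately have "card {\<pi>. \<pi> permutes X \<and> card (\<pi> ` T \<inter> B) = j} \<le> card (\<Union>S\<in>?F. ?E S)"
    by (rule card_mono[rotated])
  also have "\<dots> \<le> (\<Sum>S\<in>?F. card (?E S))"
    by (rule card_UN_le) (auto intro: finite_subset[of _ "Pow X"] simp: assms(1))
  also have "\<dots> \<le> (\<Sum>S\<in>?F. ?K)"
  proof (rule sum_mono)
    fix S assume "S \<in> ?F"
    then have "card (?E S) \<le> fact (card T) * fact (card (X - T))"
      using card_permutes_image_eq_le assms by auto
    then show "card (?E S) \<le> ?K" using assms by (simp add: card_Diff_subset finite_subset)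
  qed
  also have "\<dots> \<le> (card B choose j) * (card X choose (card T - j)) * ?K"
    using card_subsets_meeting_le[OF assms(1,3)] by simp
  finally show ?thesis .
qed

lemma binomial_le_binomial_mult_power:
  assumes "j + d \<le> (m::nat)"
  shows "m choose j \<le> (m choose (j + d)) * m ^ d"
  using assms
proof (induction d arbitrary: j)
  case 0 then show ?case by simp
next
  case (Suc d)
  then have "j < m" by simp
  have "m choose j \<le> (m - j) * (m choose j)" using \<open>j < m\<close> by simp
  also have "\<dots> = Suc j * (m choose Suc j)"
    using binomial_absorb_comp[of m j] Suc_times_binomial[of j "m - 1"] \<open>j < m\<close>
    by (metis Suc_pred' less_nat_zero_code not_gr_zero)
  also have "\<dots> \<le> m * (m choose Suc j)" using \<open>j < m\<close> by (intro mult_le_mono1) simp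
  also have "m choose Suc j \<le> (m choose (Suc j + d)) * m ^ d"
    using Suc.IH[of "Suc j"] Suc.prems by simp
  finally show ?case by (simp add: mult_ac)
qed

lemma binomial_mult_binomial_le:
  assumes "j \<le> t" "t \<le> m" "m \<le> (N::nat)"
  shows "(m choose j) * (N choose (t - j)) \<le> (m choose t) * N ^ (2 * (t - j))"
proof -
  have "m choose j \<le> (m choose t) * m ^ (t - j)"
    using binomial_le_binomial_mult_power[of j "t - j" m] assms by simp
  also have "\<dots> \<le> (m choose t) * N ^ (t - j)" using assms by (intro mult_le_mono2 power_mono) auto
  finally have "(m choose j) * (N choose (t - j)) \<le> (m choose t) * N ^ (t - j) * N ^ (t - j)"
    using binomial_le_pow[of "t - j" N] assms by (intro mult_le_mono) auto
  then show ?thesis by (simp add: mult_2 power_add mult.assoc)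
qed

lemma C_max_eq_obtains_block:
  assumes "n \<ge> 1" "C_max n m t \<pi> = j"
  obtains i where "i \<in> {1..n}" "card (\<pi> ` {1..t} \<inter> {m * (i - 1) + 1 .. m * i}) = j"
proof -
  have "C_max n m t \<pi> \<in> (\<lambda>i. card (U_block m t \<pi> i)) ` {1..n}"
    unfolding C_max_def using assms(1) by (intro Max_in) auto
  then obtain i where "i \<in> {1..n}" "card (U_block m t \<pi> i) = j" using assms(2) by auto
  then show thesis unfolding U_block_def by (rule that)
qed

lemma block_subset:
  fixes i n m :: nat
  assumes "i \<in> {1..n}"
  shows "{m * (i - 1) + 1 .. m * i} \<subseteq> {1 .. n * m}"
proof -
  have "m * i \<le> n * m" using assms by simp
  then show ?thesis by auto
qed

lemma card_block:
  fixes i m :: nat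
  assumes "i \<ge> 1"
  shows "card {m * (i - 1) + 1 .. m * i} = m"
  using assms by (cases i) simp_all

lemma card_permutes_C_max_eq_le:
  fixes n m t j :: nat
  assumes "n \<ge> 1" "t \<le> n * m"
  shows "card {\<pi>. \<pi> permutes {1..n * m} \<and> C_max n m t \<pi> = j}
           \<le> n * ((m choose j) * ((n * m) choose (t - j)) * (fact t * fact (n * m - t)))"
proof -
  define B where "B i = {m * (i - 1) + 1 .. m * i}" for i
  let ?A = "\<lambda>i. {\<pi>. \<pi> permutes {1..n * m} \<and> card (\<pi> ` {1..t} \<inter> B i) = j}"
  have "{\<pi>. \<pi> permutes {1..n * m} \<and> C_max n m t \<pi> = j} \<subseteq> (\<Union>i\<in>{1..n}. ?A i)"
    using C_max_eq_obtains_block[OF assms(1)] unfolding B_def by blast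
  then have "card {\<pi>. \<pi> permutes {1..n * m} \<and> C_max n m t \<pi> = j} \<le> card (\<Union>i\<in>{1..n}. ?A i)"
    by (rule card_mono[rotated]) (auto simp: finite_permutations)
  also have "\<dots> \<le> (\<Sum>i\<in>{1..n}. card (?A i))" by (rule card_UN_le) simp
  also have "\<dots> \<le> (\<Sum>i\<in>{1..n}. (m choose j) * ((n * m) choose (t - j)) * (fact t * fact (n * m - t)))"
  proof (rule sum_mono)
    fix i assume "i \<in> {1..n}"
    then show "card (?A i) \<le> (m choose j) * ((n * m) choose (t - j)) * (fact t * fact (n * m - t))"
      using card_permutes_image_meeting_le[of "{1..n * m}" "{1..t}" "B i" j] block_subset card_block
        assms(2) by (simp add: B_def)
  qed
  finally show ?thesis by simp
qed

lemma measure_pmf_of_set_permutes: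
  assumes "finite X"
  shows "measure_pmf.prob (pmf_of_set {\<pi>. \<pi> permutes X}) A
           = card {\<pi>. \<pi> permutes X \<and> \<pi> \<in> A} / fact (card X)"
  using assms
  by (subst measure_pmf_of_set) (auto simp: finite_permutations card_permutations Int_def intro: permutes_id)

theorem mainTheorem16:
  fixes n m t j :: nat
  assumes "n \<ge> 1" "m \<ge> 1" "1 \<le> t" "t \<le> m" "1 \<le> j" "j < t"
  shows "measure_pmf.prob (pmf_of_set {\<pi>. \<pi> permutes {1..n*m}}) {\<pi>. C_max n m t \<pi> = j}
           \<le> real n * real (m choose t) / real ((n*m) choose t) * real (n*m) ^ (3 * (t - j))"
proof -
  define N where "N = n * m"
  have "m \<le> N" using assms(1) by (simp add: N_def)
  then have "t \<le> N" using assms(4) by simp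
  have "N ^ (2 * (t - j)) \<le> N ^ (3 * (t - j))"
    using \<open>m \<le> N\<close> assms(2) by (intro power_increasing) auto
  then have binom: "(m choose j) * (N choose (t - j)) \<le> (m choose t) * N ^ (3 * (t - j))"
    using binomial_mult_binomial_le[of j t m N] assms \<open>m \<le> N\<close>
    by (meson le_trans less_imp_le mult_le_mono2)
  have fact: "fact N = real (fact t * fact (N - t) * (N choose t))"
    using binomial_fact_lemma[OF \<open>t \<le> N\<close>] by (metis of_nat_fact)
  have "measure_pmf.prob (pmf_of_set {\<pi>. \<pi> permutes {1..N}}) {\<pi>. C_max n m t \<pi> = j}
      = card {\<pi>. \<pi> permutes {1..N} \<and> C_max n m t \<pi> = j} / fact N"
    by (simp add: measure_pmf_of_set_permutes)
  also have "\<dots> \<le> n * ((m choose j) * (N choose (t - j)) * (fact t * fact (N - t))) / fact N"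
    using card_permutes_C_max_eq_le[OF assms(1), of t m j] \<open>t \<le> N\<close> unfolding N_def
    by (intro divide_right_mono) (simp_all only: of_nat_le_iff of_nat_0_le_iff fact_ge_zero)
  also have "\<dots> \<le> n * ((m choose t) * N ^ (3 * (t - j)) * (fact t * fact (N - t))) / fact N"
    using binom by (intro divide_right_mono) (simp_all only: of_nat_le_iff mult_le_mono1 mult_le_mono2 fact_ge_zero)
  also have "\<dots> = real n * real (m choose t) / real (N choose t) * real N ^ (3 * (t - j))"
    unfolding fact by simp
  finally show ?thesis unfolding N_def .
qed

end
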